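(* Let $p\in\mathbb{R}[x_1,\dots,x_n]$. Then $\|p\|_{1,\mathrm{cheb}}-p\in\mathcal Q(1-x_1^2,\dots,1-x_n^2)_{2\deg(p)}$.
   Context: $\Sigma[x]_r$ is the cone of sums of squares of polynomials in $x=(x_1,\dots,x_n)$ of total degree at most $r$; $\mathcal Q(1-x_1^2,\dots,1-x_n^2)_r=\Sigma[x]_r+\sum_{i=1}^n(1-x_i^2)\Sigma[x]_{r-2}$. $T_k(x)=\cos(k\arccos x)$; for $\alpha\in\mathbb{N}_0^n$, $T_\alpha(x)=\prod_iT_{\alpha_i}(x_i)$; for $p=\sum_\alpha p_\alpha T_\alpha$, $\|p\|_{1,\mathrm{cheb}}=\sum_\alpha|p_\alpha|$. *)

theory Defs
  imports Complex_Main "HOL-Library.Poly_Mapping"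
begin

text \<open>Real multivariate polynomials in the variables x_0, x_1, ... (index nat),
  represented by their coefficients in the monomial basis: a monomial is a
  finitely supported exponent vector, a polynomial a
  finitely supported coefficient map.\<close>

type_synonym mpoly = "(nat \<Rightarrow>\<^sub>0 nat) \<Rightarrow>\<^sub>0 real"

definition mconst :: "real \<Rightarrow> mpoly" where
  "mconst c = Poly_Mapping.single 0 c"

definition mvar :: "nat \<Rightarrow> mpoly" where
  "mvar i = Poly_Mapping.single (Poly_Mapping.single i 1) 1"

text \<open>p involves only the variables x_0,...,x_(n-1), i.e. p lies in R[x_1..x_n].\<close>
definition mpoly_in :: "nat \<Rightarrow> mpoly \<Rightarrow> bool" where
  "mpoly_in n p \<longleftrightarrow> (\<forall>m\<in>Poly_Mapping.keys (p::mpoly). Poly_Mapping.keys (m::nat \<Rightarrow>\<^sub>0 nat) \<subseteq> {..<(n::nat)})"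

text \<open>Total degree (the zero polynomial gets degree 0).\<close>
definition mdeg :: "mpoly \<Rightarrow> nat" where
  "mdeg p = Max (insert 0 ((\<lambda>\<alpha>. \<Sum>i\<in>Poly_Mapping.keys \<alpha>. Poly_Mapping.lookup \<alpha> i) ` Poly_Mapping.keys p))"

fun cheb_var :: "nat \<Rightarrow> nat \<Rightarrow> mpoly" where
  "cheb_var i 0 = 1"
| "cheb_var i (Suc 0) = mvar i"
| "cheb_var i (Suc (Suc k)) = 2 * mvar i * cheb_var i (Suc k) - cheb_var i k"

definition cheb_multi :: "(nat \<Rightarrow>\<^sub>0 nat) \<Rightarrow> mpoly" where
  "cheb_multi \<alpha> = (\<Prod>i\<in>Poly_Mapping.keys \<alpha>. cheb_var i (Poly_Mapping.lookup \<alpha> i))"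

definition cheb_coeffs :: "mpoly \<Rightarrow> (nat \<Rightarrow>\<^sub>0 nat) \<Rightarrow>\<^sub>0 real" where
  "cheb_coeffs p = (THE c. p = (\<Sum>\<alpha>\<in>Poly_Mapping.keys c. mconst (Poly_Mapping.lookup c \<alpha>) * cheb_multi \<alpha>))"

definition cheb_norm1 :: "mpoly \<Rightarrow> real" where
  "cheb_norm1 p = (\<Sum>\<alpha>\<in>Poly_Mapping.keys (cheb_coeffs p). \<bar>Poly_Mapping.lookup (cheb_coeffs p) \<alpha>\<bar>)"

text \<open>Sigma[x]_r in n variables: sums of squares q^2 of polynomials q in
  x_1..x_n with deg(q^2) = 2 deg q \<le> r. For r < 0 only the empty sum 0.\<close>
definition sos_cone :: "nat \<Rightarrow> int \<Rightarrow> mpoly set" where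
  "sos_cone n r = {sum_list (map (\<lambda>q. q ^ 2) qs) | qs.
      \<forall>q\<in>set qs. mpoly_in n q \<and> 2 * int (mdeg q) \<le> r}"

definition quad_module :: "nat \<Rightarrow> int \<Rightarrow> mpoly set" where
  "quad_module n r = {s0 + (\<Sum>i<n. (1 - mvar i ^ 2) * s i) | s0 s.
      s0 \<in> sos_cone n r \<and> (\<forall>i<n. s i \<in> sos_cone n (r - 2))}"

end

theory Submission
  imports Defs
begin

text \<open>Expand p in the tensor Chebyshev basis, p = sum_alpha c_alpha T_alpha with
  |alpha| \<le> deg p. The expansion exists because x_i T_alpha is either T_(alpha+e_i) or the mean
  of T_(alpha+e_i) and T_(alpha-e_i), and it is unique because x^alpha is the only monomial
  of top degree in T_alpha. Then ||p|| - p = sum_alpha |c_alpha| (1 - q_alpha) with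
  q_alpha = \<plusminus>T_alpha, and 2 (1 - q) = (1 - q)^2 + (1 - q^2) reduces everything to
  1 - T_alpha^2 lying in the quadratic module. That follows from the Pell identity
  T_k^2 + (1 - x^2) U_(k-1)^2 = 1 in one variable and from
  1 - (a b)^2 = (1 - a^2) + a^2 (1 - b^2) for products.\<close>

section \<open>Monomials, constants and total degree\<close>

lemma lookup_single_mult:
  fixes q :: "'a::cancel_comm_monoid_add \<Rightarrow>\<^sub>0 'b::semiring_0"
  shows "Poly_Mapping.lookup (Poly_Mapping.single m a * q) (m + g) = a * Poly_Mapping.lookup q g"
  by (simp add: lookup_mult lookup_single when_mult)

lemma keys_single_mult:
  fixes q :: "'a::comm_monoid_add \<Rightarrow>\<^sub>0 'b::semiring_0"
  shows "Poly_Mapping.keys (Poly_Mapping.single m a * q) \<subseteq> (+) m ` Poly_Mapping.keys q"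
  using keys_mult[of "Poly_Mapping.single m a" q] by (auto split: if_splits)

lemma sum_single_lookup:
  "(\<Sum>k\<in>Poly_Mapping.keys p. Poly_Mapping.single k (Poly_Mapping.lookup p k)) = p"
  by (rule poly_mapping_eqI)
    (simp add: lookup_sum lookup_single when_def in_keys_iff flip: sum.inter_filter)

lemma mconst_add: "mconst (a + b) = mconst a + mconst b"
  unfolding mconst_def by (simp add: single_add)

lemma mconst_mult: "mconst (a * b) = mconst a * mconst b"
  unfolding mconst_def by (simp add: mult_single)

lemma mconst_zero [simp]: "mconst 0 = 0"
  unfolding mconst_def by simp

lemma mconst_uminus: "mconst (- a) = - mconst a"
  unfolding mconst_def by (simp add: single_uminus)

lemma mconst_sum: "mconst (sum f A) = (\<Sum>a\<in>A. mconst (f a))"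
  by (induction A rule: infinite_finite_induct) (simp_all add: mconst_add)

lemma mconst_numeral [simp]: "mconst (numeral k) = numeral k"
  unfolding mconst_def by simp

lemma mconst_one [simp]: "mconst 1 = 1"
  unfolding mconst_def by simp

lemma mconst_half_mult_double: "mconst (1 / 2) * (2 * q) = q"
proof -
  have "mconst (1 / 2) * (2 * q) = mconst (1 / 2 * 2) * q"
    by (simp only: mconst_mult mconst_numeral mult.assoc)
  then show ?thesis
    by simp
qed

lemma lookup_mconst_mult: "Poly_Mapping.lookup (mconst c * q) m = c * Poly_Mapping.lookup q m"
  using lookup_single_mult[of 0 c q m] unfolding mconst_def by simp

lemma mconst_mult_single: "mconst c * Poly_Mapping.single m 1 = Poly_Mapping.single m c"
  unfolding mconst_def by (simp add: mult_single)

definition deg_pm :: "('a \<Rightarrow>\<^sub>0 nat) \<Rightarrow> nat" where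
  "deg_pm a = (\<Sum>i\<in>Poly_Mapping.keys a. Poly_Mapping.lookup a i)"

lemma deg_pm_add: "deg_pm (a + b) = deg_pm a + deg_pm b"
  unfolding deg_pm_def by (rule setsum_keys_plus_distrib) auto

lemma deg_pm_zero [simp]: "deg_pm 0 = 0"
  unfolding deg_pm_def by simp

lemma deg_pm_single [simp]: "deg_pm (Poly_Mapping.single i k) = k"
  unfolding deg_pm_def by simp

lemma minus_single_add_single:
  fixes a :: "'a \<Rightarrow>\<^sub>0 nat"
  assumes "i \<in> Poly_Mapping.keys a"
  shows "(a - Poly_Mapping.single i 1) + Poly_Mapping.single i 1 = a"
proof (rule poly_mapping_eqI)
  fix k
  have "0 < Poly_Mapping.lookup a i"
    using assms by (simp add: in_keys_iff)
  then show "Poly_Mapping.lookup (a - Poly_Mapping.single i 1 + Poly_Mapping.single i 1) k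
      = Poly_Mapping.lookup a k"
    by (auto simp: lookup_add lookup_minus lookup_single when_def)
qed

text \<open>Stated for \<open>Suc k\<close> because the simplifier normalises \<open>single i 1\<close>
  to \<open>single i (Suc 0)\<close>.\<close>

lemma keys_add_single:
  "Poly_Mapping.keys (b + Poly_Mapping.single i (Suc k)) = insert i (Poly_Mapping.keys b)"
  by (auto simp: in_keys_iff lookup_add lookup_single when_def split: if_splits)

lemma deg_pm_minus_single:
  assumes "i \<in> Poly_Mapping.keys a"
  shows "deg_pm a = Suc (deg_pm (a - Poly_Mapping.single i 1))"
proof -
  have "deg_pm a = deg_pm ((a - Poly_Mapping.single i 1) + Poly_Mapping.single i 1)"
    by (simp only: minus_single_add_single[OF assms])
  also have "\<dots> = Suc (deg_pm (a - Poly_Mapping.single i 1))"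
    by (simp add: deg_pm_add)
  finally show ?thesis .
qed

lemma deg_pm_induct [case_names zero add_single]:
  assumes "P 0"
    and "\<And>b i. (\<And>c. deg_pm c \<le> deg_pm b \<Longrightarrow> P c) \<Longrightarrow> P (b + Poly_Mapping.single i 1)"
  shows "P a"
proof (induction "deg_pm a" arbitrary: a rule: less_induct)
  case less
  show ?case
  proof (cases "a = 0")
    case True
    then show ?thesis using assms(1) by simp
  next
    case False
    then obtain i where i: "i \<in> Poly_Mapping.keys a"
      by fastforce
    then have "P ((a - Poly_Mapping.single i 1) + Poly_Mapping.single i 1)"
      using deg_pm_minus_single[OF i] by (intro assms(2) less) auto
    then show ?thesis
      by (simp only: minus_single_add_single[OF i])
  qed
qed

lemma mdeg_le_iff: "mdeg p \<le> d \<longleftrightarrow> (\<forall>m\<in>Poly_Mapping.keys p. deg_pm m \<le> d)"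
  unfolding mdeg_def deg_pm_def by simp

lemma deg_pm_le_mdeg: "m \<in> Poly_Mapping.keys p \<Longrightarrow> deg_pm m \<le> mdeg p"
  using mdeg_le_iff by blast

lemma mdeg_diff_le: "mdeg p \<le> d \<Longrightarrow> mdeg q \<le> d \<Longrightarrow> mdeg (p - q) \<le> d"
  unfolding mdeg_le_iff using keys_diff[of p q] by blast

lemma mdeg_uminus [simp]: "mdeg (- p) = mdeg p"
  unfolding mdeg_def by simp

lemma mdeg_mult_le:
  assumes "mdeg p \<le> d" "mdeg q \<le> e"
  shows "mdeg (p * q) \<le> d + e"
  unfolding mdeg_le_iff
proof
  fix m
  assume "m \<in> Poly_Mapping.keys (p * q)"
  then obtain a b where "m = a + b" "a \<in> Poly_Mapping.keys p" "b \<in> Poly_Mapping.keys q"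
    using keys_mult[of p q] by blast
  then show "deg_pm m \<le> d + e"
    using assms by (simp add: mdeg_le_iff deg_pm_add add_mono)
qed

lemma mdeg_prod_le:
  "(\<And>a. a \<in> A \<Longrightarrow> mdeg (f a) \<le> d a) \<Longrightarrow> mdeg (prod f A) \<le> sum d A"
proof (induction A rule: infinite_finite_induct)
  case (insert x F)
  then have "mdeg (f x * prod f F) \<le> d x + sum d F"
    by (intro mdeg_mult_le) auto
  with insert show ?case
    by simp
qed (simp_all add: mdeg_def)

lemma mdeg_mconst [simp]: "mdeg (mconst c) = 0"
  unfolding mdeg_def mconst_def by simp

lemma mdeg_numeral [simp]: "mdeg (numeral k) = 0"
  using mdeg_mconst[of "numeral k"] by simp

lemma mdeg_one [simp]: "mdeg 1 = 0"
  using mdeg_mconst[of 1] by simp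

lemma mdeg_mvar: "mdeg (mvar i) = 1"
  unfolding mdeg_def mvar_def by simp

lemma mpoly_in_iff: "mpoly_in n p \<longleftrightarrow> (\<forall>m\<in>Poly_Mapping.keys p. Poly_Mapping.keys m \<subseteq> {..<n})"
  unfolding mpoly_in_def by simp

lemma mpoly_in_diff: "mpoly_in n p \<Longrightarrow> mpoly_in n q \<Longrightarrow> mpoly_in n (p - q)"
  unfolding mpoly_in_iff using keys_diff[of p q] by blast

lemma mpoly_in_uminus: "mpoly_in n p \<Longrightarrow> mpoly_in n (- p)"
  unfolding mpoly_in_iff by simp

lemma mpoly_in_mult:
  assumes "mpoly_in n p" "mpoly_in n q"
  shows "mpoly_in n (p * q)"
  unfolding mpoly_in_iff
proof
  fix m
  assume "m \<in> Poly_Mapping.keys (p * q)"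
  then obtain a b where "m = a + b" "a \<in> Poly_Mapping.keys p" "b \<in> Poly_Mapping.keys q"
    using keys_mult[of p q] by blast
  then show "Poly_Mapping.keys m \<subseteq> {..<n}"
    using assms keys_add[of a b] unfolding mpoly_in_iff by blast
qed

lemma mpoly_in_mconst [simp]: "mpoly_in n (mconst c)"
  unfolding mpoly_in_iff mconst_def by simp

lemma mpoly_in_numeral [simp]: "mpoly_in n (numeral k)"
  using mpoly_in_mconst[of n "numeral k"] by simp

lemma mpoly_in_one [simp]: "mpoly_in n 1"
  using mpoly_in_mconst[of n 1] by simp

lemma mpoly_in_prod: "(\<And>a. a \<in> A \<Longrightarrow> mpoly_in n (f a)) \<Longrightarrow> mpoly_in n (prod f A)"
  by (induction A rule: infinite_finite_induct) (simp_all add: mpoly_in_mult)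

lemma mpoly_in_mvar: "i < n \<Longrightarrow> mpoly_in n (mvar i)"
  unfolding mpoly_in_iff mvar_def by simp

section \<open>Chebyshev polynomials of one variable\<close>

fun cheb_T :: "'a::comm_ring_1 \<Rightarrow> nat \<Rightarrow> 'a" where
  "cheb_T x 0 = 1"
| "cheb_T x (Suc 0) = x"
| "cheb_T x (Suc (Suc k)) = 2 * x * cheb_T x (Suc k) - cheb_T x k"

fun cheb_U :: "'a::comm_ring_1 \<Rightarrow> nat \<Rightarrow> 'a" where
  "cheb_U x 0 = 1"
| "cheb_U x (Suc 0) = 2 * x"
| "cheb_U x (Suc (Suc k)) = 2 * x * cheb_U x (Suc k) - cheb_U x k"

definition cheb_recurrent :: "'a::comm_ring_1 \<Rightarrow> (nat \<Rightarrow> 'a) \<Rightarrow> bool" where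
  "cheb_recurrent x f \<longleftrightarrow> (\<forall>k. f (Suc (Suc k)) = 2 * x * f (Suc k) - f k)"

lemma cheb_recurrent_cheb_T: "cheb_recurrent x (cheb_T x)"
  unfolding cheb_recurrent_def by simp

lemma cheb_recurrent_cheb_U: "cheb_recurrent x (cheb_U x)"
  unfolding cheb_recurrent_def by simp

lemma cheb_recurrent_shift: "cheb_recurrent x f \<Longrightarrow> cheb_recurrent x (\<lambda>k. f (Suc k))"
  unfolding cheb_recurrent_def by simp

lemma cheb_recurrent_add:
  "cheb_recurrent x f \<Longrightarrow> cheb_recurrent x g \<Longrightarrow> cheb_recurrent x (\<lambda>k. f k + g k)"
  unfolding cheb_recurrent_def by (simp add: algebra_simps)

lemma cheb_recurrent_mult:
  "cheb_recurrent x f \<Longrightarrow> cheb_recurrent x (\<lambda>k. c * f k)"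
  unfolding cheb_recurrent_def by (simp add: right_diff_distrib mult.left_commute)

lemma cheb_recurrent_eqI:
  assumes "cheb_recurrent x f" "cheb_recurrent x g" "f 0 = g 0" "f (Suc 0) = g (Suc 0)"
  shows "f k = g k"
  using assms unfolding cheb_recurrent_def by (induction k rule: induct_nat_012) simp_all

text \<open>Both sides satisfy the Chebyshev recurrence in k, so comparing two initial values
  suffices.\<close>

lemma cheb_T_Suc_Suc: "cheb_T x (Suc (Suc k)) = x * cheb_T x (Suc k) + (x\<^sup>2 - 1) * cheb_U x k"
proof (rule cheb_recurrent_eqI[where f = "\<lambda>k. cheb_T x (Suc (Suc k))"
      and g = "\<lambda>k. x * cheb_T x (Suc k) + (x\<^sup>2 - 1) * cheb_U x k"])
  show "cheb_recurrent x (\<lambda>k. cheb_T x (Suc (Suc k)))"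
    by (intro cheb_recurrent_shift cheb_recurrent_cheb_T)
  show "cheb_recurrent x (\<lambda>k. x * cheb_T x (Suc k) + (x\<^sup>2 - 1) * cheb_U x k)"
    by (intro cheb_recurrent_add cheb_recurrent_mult cheb_recurrent_shift
        cheb_recurrent_cheb_T cheb_recurrent_cheb_U)
qed (simp_all add: algebra_simps power2_eq_square)

lemma cheb_U_Suc: "cheb_U x (Suc k) = cheb_T x (Suc k) + x * cheb_U x k"
proof (rule cheb_recurrent_eqI[where f = "\<lambda>k. cheb_U x (Suc k)"
      and g = "\<lambda>k. cheb_T x (Suc k) + x * cheb_U x k"])
  show "cheb_recurrent x (\<lambda>k. cheb_U x (Suc k))"
    by (intro cheb_recurrent_shift cheb_recurrent_cheb_U)
  show "cheb_recurrent x (\<lambda>k. cheb_T x (Suc k) + x * cheb_U x k)"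
    by (intro cheb_recurrent_add cheb_recurrent_mult cheb_recurrent_shift
        cheb_recurrent_cheb_T cheb_recurrent_cheb_U)
qed (simp_all add: algebra_simps mult_2)

lemma cheb_pell: "(cheb_T x (Suc k))\<^sup>2 + (1 - x\<^sup>2) * (cheb_U x k)\<^sup>2 = 1"
proof (induction k)
  case 0
  then show ?case by (simp add: algebra_simps)
next
  case (Suc k)
  have "(cheb_T x (Suc (Suc k)))\<^sup>2 + (1 - x\<^sup>2) * (cheb_U x (Suc k))\<^sup>2
      = (x * cheb_T x (Suc k) + (x\<^sup>2 - 1) * cheb_U x k)\<^sup>2
        + (1 - x\<^sup>2) * (cheb_T x (Suc k) + x * cheb_U x k)\<^sup>2"
    by (simp only: cheb_T_Suc_Suc cheb_U_Suc)
  also have "\<dots> = (cheb_T x (Suc k))\<^sup>2 + (1 - x\<^sup>2) * (cheb_U x k)\<^sup>2"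
    by (simp add: algebra_simps power2_eq_square)
  finally show ?case
    using Suc by simp
qed

lemma mdeg_cheb_recurrent_le:
  assumes "cheb_recurrent x f" "mdeg x \<le> 1" "mdeg (f 0) = 0" "mdeg (f (Suc 0)) \<le> 1"
  shows "mdeg (f k) \<le> k"
proof (induction k rule: induct_nat_012)
  case (ge2 k)
  have "mdeg (2 * x * f (Suc k)) \<le> 0 + 1 + Suc k"
    using assms(2) ge2 by (intro mdeg_mult_le) simp_all
  then have "mdeg (2 * x * f (Suc k) - f k) \<le> Suc (Suc k)"
    using ge2 by (intro mdeg_diff_le) simp_all
  then show ?case
    using assms(1) unfolding cheb_recurrent_def by simp
qed (use assms in simp_all)

lemma mpoly_in_cheb_recurrent:
  assumes "cheb_recurrent x f" "mpoly_in n x" "mpoly_in n (f 0)" "mpoly_in n (f (Suc 0))"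
  shows "mpoly_in n (f k)"
proof (induction k rule: induct_nat_012)
  case (ge2 k)
  then show ?case
    using assms unfolding cheb_recurrent_def by (simp add: mpoly_in_diff mpoly_in_mult)
qed (use assms in simp_all)

lemma mdeg_cheb_T_le: "mdeg x \<le> 1 \<Longrightarrow> mdeg (cheb_T x k) \<le> k"
  by (rule mdeg_cheb_recurrent_le[OF cheb_recurrent_cheb_T]) simp_all

lemma mdeg_cheb_U_le: "mdeg x \<le> 1 \<Longrightarrow> mdeg (cheb_U x k) \<le> k"
  using mdeg_mult_le[of 2 0 x 1]
  by (intro mdeg_cheb_recurrent_le[OF cheb_recurrent_cheb_U]) simp_all

lemma mpoly_in_cheb_T: "mpoly_in n x \<Longrightarrow> mpoly_in n (cheb_T x k)"
  by (rule mpoly_in_cheb_recurrent[OF cheb_recurrent_cheb_T]) simp_all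

lemma mpoly_in_cheb_U: "mpoly_in n x \<Longrightarrow> mpoly_in n (cheb_U x k)"
  by (rule mpoly_in_cheb_recurrent[OF cheb_recurrent_cheb_U]) (simp_all add: mpoly_in_mult)

lemma cheb_var_eq_cheb_T: "cheb_var i k = cheb_T (mvar i) k"
  by (induction i k rule: cheb_var.induct) simp_all

lemma mdeg_cheb_var_le: "mdeg (cheb_var i k) \<le> k"
  unfolding cheb_var_eq_cheb_T by (simp add: mdeg_cheb_T_le mdeg_mvar)

lemma mpoly_in_cheb_var: "i < n \<Longrightarrow> mpoly_in n (cheb_var i k)"
  unfolding cheb_var_eq_cheb_T by (simp add: mpoly_in_cheb_T mpoly_in_mvar)

section \<open>Tensor Chebyshev polynomials\<close>

lemma mdeg_cheb_multi_le: "mdeg (cheb_multi a) \<le> deg_pm a"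
  unfolding cheb_multi_def deg_pm_def by (rule mdeg_prod_le) (rule mdeg_cheb_var_le)

lemma mpoly_in_cheb_multi: "Poly_Mapping.keys a \<subseteq> {..<n} \<Longrightarrow> mpoly_in n (cheb_multi a)"
  unfolding cheb_multi_def by (rule mpoly_in_prod) (auto intro: mpoly_in_cheb_var)

lemma cheb_multi_zero [simp]: "cheb_multi 0 = 1"
  unfolding cheb_multi_def by simp

lemma cheb_multi_eq_cheb_var_mult:
  "cheb_multi a = cheb_var i (Poly_Mapping.lookup a i) * cheb_multi (Poly_Mapping.update i 0 a)"
proof (cases "i \<in> Poly_Mapping.keys a")
  case True
  have "cheb_multi a = cheb_var i (Poly_Mapping.lookup a i)
      * (\<Prod>j\<in>Poly_Mapping.keys a - {i}. cheb_var j (Poly_Mapping.lookup a j))"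
    unfolding cheb_multi_def using True by (simp add: prod.remove)
  also have "(\<Prod>j\<in>Poly_Mapping.keys a - {i}. cheb_var j (Poly_Mapping.lookup a j))
      = cheb_multi (Poly_Mapping.update i 0 a)"
    unfolding cheb_multi_def keys_update by (intro prod.cong) (auto simp: lookup_update)
  finally show ?thesis .
next
  case False
  then have "Poly_Mapping.update i 0 a = a"
    by (intro poly_mapping_eqI) (auto simp: lookup_update in_keys_iff)
  with False show ?thesis
    by (simp add: in_keys_iff)
qed

lemma update_zero_add_single:
  "Poly_Mapping.update i 0 (b + Poly_Mapping.single i k) = Poly_Mapping.update i 0 b"
  by (intro poly_mapping_eqI) (simp add: lookup_update lookup_add lookup_single)

lemma update_zero_minus_single:
  "Poly_Mapping.update i 0 (b - Poly_Mapping.single i k) = Poly_Mapping.update i 0 b"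
  by (intro poly_mapping_eqI) (simp add: lookup_update lookup_minus lookup_single)

lemma cheb_multi_add_single_fresh:
  assumes "Poly_Mapping.lookup b i = 0"
  shows "cheb_multi (b + Poly_Mapping.single i 1) = mvar i * cheb_multi b"
  using cheb_multi_eq_cheb_var_mult[of "b + Poly_Mapping.single i 1" i]
    cheb_multi_eq_cheb_var_mult[of b i] assms
  by (simp add: update_zero_add_single lookup_add)

lemma cheb_multi_add_single:
  assumes "0 < Poly_Mapping.lookup b i"
  shows "cheb_multi (b + Poly_Mapping.single i 1)
    = 2 * mvar i * cheb_multi b - cheb_multi (b - Poly_Mapping.single i 1)"
proof -
  obtain k where k: "Poly_Mapping.lookup b i = Suc k"
    using assms gr0_implies_Suc by blast
  let ?rest = "cheb_multi (Poly_Mapping.update i 0 b)"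
  have "cheb_multi (b + Poly_Mapping.single i 1) = cheb_var i (Suc (Suc k)) * ?rest"
    using cheb_multi_eq_cheb_var_mult[of "b + Poly_Mapping.single i 1" i] k
    by (simp add: update_zero_add_single lookup_add)
  moreover have "cheb_multi b = cheb_var i (Suc k) * ?rest"
    using cheb_multi_eq_cheb_var_mult[of b i] k by simp
  moreover have "cheb_multi (b - Poly_Mapping.single i 1) = cheb_var i k * ?rest"
    using cheb_multi_eq_cheb_var_mult[of "b - Poly_Mapping.single i 1" i] k
    by (simp add: update_zero_minus_single lookup_minus)
  ultimately show ?thesis
    by (simp add: algebra_simps)
qed

text \<open>Triangularity in the graded order: for T_alpha this is what makes the Chebyshev
  expansion unique.\<close>

definition top_monomial :: "mpoly \<Rightarrow> (nat \<Rightarrow>\<^sub>0 nat) \<Rightarrow> bool" where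
  "top_monomial q a \<longleftrightarrow> 0 < Poly_Mapping.lookup q a
     \<and> (\<forall>g\<in>Poly_Mapping.keys q - {a}. deg_pm g < deg_pm a)"

lemma top_monomial_one: "top_monomial 1 0"
  unfolding top_monomial_def by simp

lemma top_monomial_mvar_mult:
  assumes "top_monomial q b"
  shows "top_monomial (mvar i * q) (b + Poly_Mapping.single i 1)"
proof -
  let ?e = "Poly_Mapping.single i (1::nat)"
  have "Poly_Mapping.lookup (mvar i * q) (?e + g) = Poly_Mapping.lookup q g" for g
    unfolding mvar_def by (simp add: lookup_single_mult)
  moreover have "\<exists>g\<in>Poly_Mapping.keys q. h = ?e + g" if "h \<in> Poly_Mapping.keys (mvar i * q)" for h
    using that keys_single_mult[of ?e 1 q] unfolding mvar_def by blast
  ultimately show ?thesis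
    using assms unfolding top_monomial_def by (force simp: deg_pm_add add.commute)
qed

lemma top_monomial_mconst_mult:
  "0 < c \<Longrightarrow> top_monomial q a \<Longrightarrow> top_monomial (mconst c * q) a"
  unfolding top_monomial_def by (simp add: lookup_mconst_mult in_keys_iff)

lemma top_monomial_diff:
  assumes "top_monomial q a" "mdeg r < deg_pm a"
  shows "top_monomial (q - r) a"
proof -
  have r: "deg_pm g < deg_pm a" if "g \<in> Poly_Mapping.keys r" for g
    using deg_pm_le_mdeg[OF that] assms(2) by simp
  then have "Poly_Mapping.lookup r a = 0"
    by (auto simp: in_keys_iff)
  then show ?thesis
    using assms(1) keys_diff[of q r] r unfolding top_monomial_def by (auto simp: lookup_minus)
qed

lemma top_monomial_cheb_multi: "top_monomial (cheb_multi a) a"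
proof (induction a rule: deg_pm_induct)
  case zero
  then show ?case by (simp add: top_monomial_one)
next
  case (add_single b i)
  have IH: "top_monomial (cheb_multi b) b"
    by (rule add_single) simp
  show ?case
  proof (cases "Poly_Mapping.lookup b i = 0")
    case True
    show ?thesis
      unfolding cheb_multi_add_single_fresh[OF True] by (rule top_monomial_mvar_mult[OF IH])
  next
    case False
    then have i: "i \<in> Poly_Mapping.keys b"
      by (simp add: in_keys_iff)
    have "top_monomial (mconst 2 * (mvar i * cheb_multi b)) (b + Poly_Mapping.single i 1)"
      by (intro top_monomial_mconst_mult top_monomial_mvar_mult IH) simp
    moreover have "mdeg (cheb_multi (b - Poly_Mapping.single i 1))
        < deg_pm (b + Poly_Mapping.single i 1)"
      using mdeg_cheb_multi_le[of "b - Poly_Mapping.single i 1"] deg_pm_minus_single[OF i]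
      by (simp add: deg_pm_add)
    ultimately show ?thesis
      unfolding cheb_multi_add_single[OF False[unfolded neq0_conv]]
      by (simp add: top_monomial_diff mult.assoc)
  qed
qed

section \<open>The Chebyshev expansion\<close>

definition cheb_expand :: "((nat \<Rightarrow>\<^sub>0 nat) \<Rightarrow>\<^sub>0 real) \<Rightarrow> mpoly" where
  "cheb_expand c = (\<Sum>\<alpha>\<in>Poly_Mapping.keys c. mconst (Poly_Mapping.lookup c \<alpha>) * cheb_multi \<alpha>)"

lemma cheb_expand_eq_sum:
  assumes "finite A" "Poly_Mapping.keys c \<subseteq> A"
  shows "cheb_expand c = (\<Sum>\<alpha>\<in>A. mconst (Poly_Mapping.lookup c \<alpha>) * cheb_multi \<alpha>)"
  unfolding cheb_expand_def using assms by (intro sum.mono_neutral_left) (auto simp: in_keys_iff)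

lemma cheb_expand_zero [simp]: "cheb_expand 0 = 0"
  unfolding cheb_expand_def by simp

lemma cheb_expand_single [simp]: "cheb_expand (Poly_Mapping.single \<alpha> 1) = cheb_multi \<alpha>"
  unfolding cheb_expand_def by simp

lemma cheb_expand_add: "cheb_expand (c + d) = cheb_expand c + cheb_expand d"
  unfolding cheb_expand_def by (rule setsum_keys_plus_distrib) (simp_all add: mconst_add distrib_right)

lemma lookup_map_mult:
  "Poly_Mapping.lookup (Poly_Mapping.map ((*) (r::real)) c) \<alpha> = r * Poly_Mapping.lookup c \<alpha>"
  by (simp add: map.rep_eq when_def)

lemma keys_map_mult: "Poly_Mapping.keys (Poly_Mapping.map ((*) (r::real)) c) \<subseteq> Poly_Mapping.keys c"
  by (auto simp: in_keys_iff lookup_map_mult)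

lemma cheb_expand_scale: "cheb_expand (Poly_Mapping.map ((*) r) c) = mconst r * cheb_expand c"
proof -
  have "cheb_expand (Poly_Mapping.map ((*) r) c)
      = (\<Sum>\<alpha>\<in>Poly_Mapping.keys c. mconst (r * Poly_Mapping.lookup c \<alpha>) * cheb_multi \<alpha>)"
    using cheb_expand_eq_sum[OF finite_keys keys_map_mult] by (simp add: lookup_map_mult)
  then show ?thesis
    unfolding cheb_expand_def by (simp add: mconst_mult sum_distrib_left mult.assoc)
qed

lemma lookup_cheb_multi_eq_zero:
  assumes "\<alpha> \<noteq> \<beta>" "deg_pm \<beta> \<le> deg_pm \<alpha>"
  shows "Poly_Mapping.lookup (cheb_multi \<beta>) \<alpha> = 0"
proof (rule ccontr)
  assume "Poly_Mapping.lookup (cheb_multi \<beta>) \<alpha> \<noteq> 0"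
  then have "\<alpha> \<in> Poly_Mapping.keys (cheb_multi \<beta>) - {\<beta>}"
    using assms(1) by (simp add: in_keys_iff)
  then have "deg_pm \<alpha> < deg_pm \<beta>"
    using top_monomial_cheb_multi[of \<beta>] unfolding top_monomial_def by blast
  with assms(2) show False
    by simp
qed

lemma cheb_expand_eq_zero:
  assumes "cheb_expand c = 0"
  shows "c = 0"
proof (rule ccontr)
  assume "c \<noteq> 0"
  define D where "D = deg_pm ` Poly_Mapping.keys c"
  have "Max D \<in> D"
    using \<open>c \<noteq> 0\<close> unfolding D_def by (intro Max_in) auto
  then obtain \<alpha> where \<alpha>: "\<alpha> \<in> Poly_Mapping.keys c" and max: "deg_pm \<alpha> = Max D"
    unfolding D_def by (metis imageE)
  have "0 = Poly_Mapping.lookup (cheb_expand c) \<alpha>"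
    using assms by simp
  also have "\<dots> = (\<Sum>\<beta>\<in>Poly_Mapping.keys c.
      Poly_Mapping.lookup c \<beta> * Poly_Mapping.lookup (cheb_multi \<beta>) \<alpha>)"
    unfolding cheb_expand_def by (simp add: lookup_sum lookup_mconst_mult)
  also have "\<dots> = (\<Sum>\<beta>\<in>{\<alpha>}.
      Poly_Mapping.lookup c \<beta> * Poly_Mapping.lookup (cheb_multi \<beta>) \<alpha>)"
  proof (rule sum.mono_neutral_right)
    show "\<forall>\<beta>\<in>Poly_Mapping.keys c - {\<alpha>}.
        Poly_Mapping.lookup c \<beta> * Poly_Mapping.lookup (cheb_multi \<beta>) \<alpha> = 0"
    proof
      fix \<beta>
      assume \<beta>: "\<beta> \<in> Poly_Mapping.keys c - {\<alpha>}"
      then have "deg_pm \<beta> \<le> deg_pm \<alpha>"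
        unfolding max D_def by simp
      with \<beta> show "Poly_Mapping.lookup c \<beta> * Poly_Mapping.lookup (cheb_multi \<beta>) \<alpha> = 0"
        using lookup_cheb_multi_eq_zero[of \<alpha> \<beta>] by auto
    qed
  qed (use \<alpha> in simp_all)
  finally show False
    using \<alpha> top_monomial_cheb_multi[of \<alpha>] unfolding top_monomial_def by (simp add: in_keys_iff)
qed

lemma cheb_expand_inject: "cheb_expand c = cheb_expand d \<Longrightarrow> c = d"
  using cheb_expand_add[of "c - d" d] cheb_expand_eq_zero[of "c - d"] by simp

lemma cheb_coeffs_cheb_expand: "cheb_coeffs (cheb_expand c) = c"
  unfolding cheb_coeffs_def
  by (rule the_equality) (auto simp flip: cheb_expand_def dest: cheb_expand_inject)

definition cheb_span :: "nat \<Rightarrow> nat \<Rightarrow> mpoly set" where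
  "cheb_span n d = {cheb_expand c | c.
     \<forall>\<alpha>\<in>Poly_Mapping.keys c. Poly_Mapping.keys \<alpha> \<subseteq> {..<n} \<and> deg_pm \<alpha> \<le> d}"

lemma cheb_span_zero: "0 \<in> cheb_span n d"
  unfolding cheb_span_def by (intro CollectI exI[of _ 0]) simp

lemma cheb_span_add: "p \<in> cheb_span n d \<Longrightarrow> q \<in> cheb_span n d \<Longrightarrow> p + q \<in> cheb_span n d"
  unfolding cheb_span_def using keys_add by (fastforce simp flip: cheb_expand_add)

lemma cheb_span_scale: "q \<in> cheb_span n d \<Longrightarrow> mconst r * q \<in> cheb_span n d"
  unfolding cheb_span_def using keys_map_mult
  by (fastforce simp flip: cheb_expand_scale)

lemma cheb_span_sum: "(\<And>x. x \<in> A \<Longrightarrow> f x \<in> cheb_span n d) \<Longrightarrow> sum f A \<in> cheb_span n d"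
  by (induction A rule: infinite_finite_induct) (auto intro: cheb_span_zero cheb_span_add)

lemma cheb_multi_in_cheb_span:
  "Poly_Mapping.keys \<alpha> \<subseteq> {..<n} \<Longrightarrow> deg_pm \<alpha> \<le> d \<Longrightarrow> cheb_multi \<alpha> \<in> cheb_span n d"
  unfolding cheb_span_def by (intro CollectI exI[of _ "Poly_Mapping.single \<alpha> 1"]) simp

lemma cheb_span_mono: "d \<le> e \<Longrightarrow> cheb_span n d \<subseteq> cheb_span n e"
  unfolding cheb_span_def by fastforce

lemma mvar_mult_cheb_multi_in_cheb_span:
  assumes "i < n" "Poly_Mapping.keys \<alpha> \<subseteq> {..<n}" "deg_pm \<alpha> \<le> d"
  shows "mvar i * cheb_multi \<alpha> \<in> cheb_span n (Suc d)"
proof -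
  let ?e = "Poly_Mapping.single i (1::nat)"
  have up: "cheb_multi (\<alpha> + ?e) \<in> cheb_span n (Suc d)"
    using assms by (intro cheb_multi_in_cheb_span) (simp_all add: keys_add_single deg_pm_add)
  show ?thesis
  proof (cases "Poly_Mapping.lookup \<alpha> i = 0")
    case True
    then show ?thesis
      using up by (simp only: cheb_multi_add_single_fresh)
  next
    case False
    then have i: "i \<in> Poly_Mapping.keys \<alpha>"
      by (simp add: in_keys_iff)
    have "cheb_multi (\<alpha> - ?e) \<in> cheb_span n (Suc d)"
      using assms deg_pm_minus_single[OF i] keys_diff[of \<alpha> ?e]
      by (intro cheb_multi_in_cheb_span) auto
    with up have "mconst (1 / 2) * (cheb_multi (\<alpha> + ?e) + cheb_multi (\<alpha> - ?e))
        \<in> cheb_span n (Suc d)"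
      by (intro cheb_span_scale cheb_span_add)
    moreover have "cheb_multi (\<alpha> + ?e) + cheb_multi (\<alpha> - ?e) = 2 * (mvar i * cheb_multi \<alpha>)"
      unfolding cheb_multi_add_single[OF False[unfolded neq0_conv]] by (simp add: mult.assoc)
    ultimately show ?thesis
      by (simp add: mconst_half_mult_double)
  qed
qed

lemma mvar_mult_cheb_span:
  assumes "i < n" "q \<in> cheb_span n d"
  shows "mvar i * q \<in> cheb_span n (Suc d)"
proof -
  obtain c where q: "q = cheb_expand c"
    and c: "\<forall>\<alpha>\<in>Poly_Mapping.keys c. Poly_Mapping.keys \<alpha> \<subseteq> {..<n} \<and> deg_pm \<alpha> \<le> d"
    using assms(2) unfolding cheb_span_def by blast
  have "mvar i * q
      = (\<Sum>\<alpha>\<in>Poly_Mapping.keys c. mconst (Poly_Mapping.lookup c \<alpha>) * (mvar i * cheb_multi \<alpha>))"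
    unfolding q cheb_expand_def by (simp add: sum_distrib_left mult.left_commute)
  also have "\<dots> \<in> cheb_span n (Suc d)"
    using c by (intro cheb_span_sum cheb_span_scale mvar_mult_cheb_multi_in_cheb_span assms(1)) auto
  finally show ?thesis .
qed

lemma monomial_in_cheb_span:
  "Poly_Mapping.keys \<alpha> \<subseteq> {..<n} \<Longrightarrow> Poly_Mapping.single \<alpha> 1 \<in> cheb_span n (deg_pm \<alpha>)"
proof (induction \<alpha> rule: deg_pm_induct)
  case zero
  then show ?case
    using cheb_multi_in_cheb_span[of 0 n 0] by simp
next
  case (add_single b i)
  have "Poly_Mapping.keys b \<subseteq> {..<n}" "i < n"
    using add_single.prems by (simp_all add: keys_add_single)
  then have "mvar i * Poly_Mapping.single b 1 \<in> cheb_span n (Suc (deg_pm b))"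
    using add_single.IH by (intro mvar_mult_cheb_span) simp_all
  then show ?case
    unfolding mvar_def by (simp add: mult_single deg_pm_add add.commute)
qed

lemma mpoly_in_cheb_span:
  assumes "mpoly_in n p"
  shows "p \<in> cheb_span n (mdeg p)"
proof -
  have "(\<Sum>m\<in>Poly_Mapping.keys p. mconst (Poly_Mapping.lookup p m) * Poly_Mapping.single m 1)
      \<in> cheb_span n (mdeg p)"
  proof (intro cheb_span_sum cheb_span_scale)
    fix m
    assume m: "m \<in> Poly_Mapping.keys p"
    then have "Poly_Mapping.single m 1 \<in> cheb_span n (deg_pm m)"
      using assms unfolding mpoly_in_iff by (intro monomial_in_cheb_span) auto
    then show "Poly_Mapping.single m 1 \<in> cheb_span n (mdeg p)"
      using cheb_span_mono[OF deg_pm_le_mdeg[OF m]] by blast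
  qed
  then show ?thesis
    by (simp add: mconst_mult_single sum_single_lookup)
qed

section \<open>The truncated quadratic module\<close>

lemma sos_cone_intro:
  "(\<And>q. q \<in> set qs \<Longrightarrow> mpoly_in n q \<and> 2 * int (mdeg q) \<le> r)
    \<Longrightarrow> sum_list (map (\<lambda>q. q ^ 2) qs) \<in> sos_cone n r"
  unfolding sos_cone_def by blast

lemma sos_cone_elim:
  assumes "s \<in> sos_cone n r"
  obtains qs where "s = sum_list (map (\<lambda>q. q ^ 2) qs)"
    and "\<And>q. q \<in> set qs \<Longrightarrow> mpoly_in n q \<and> 2 * int (mdeg q) \<le> r"
  using assms unfolding sos_cone_def by blast

lemma sos_cone_add:
  assumes "s \<in> sos_cone n r" "t \<in> sos_cone n r"
  shows "s + t \<in> sos_cone n r"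
proof -
  obtain qs ts where "s = sum_list (map (\<lambda>q. q ^ 2) qs)" "t = sum_list (map (\<lambda>q. q ^ 2) ts)"
    and "\<And>q. q \<in> set qs \<union> set ts \<Longrightarrow> mpoly_in n q \<and> 2 * int (mdeg q) \<le> r"
    using assms by (elim sos_cone_elim) blast
  then show ?thesis
    using sos_cone_intro[of "qs @ ts"] by simp
qed

lemma sos_cone_zero: "0 \<in> sos_cone n r"
  using sos_cone_intro[of "[]"] by simp

lemma square_in_sos_cone: "mpoly_in n q \<Longrightarrow> 2 * int (mdeg q) \<le> r \<Longrightarrow> q\<^sup>2 \<in> sos_cone n r"
  using sos_cone_intro[of "[q]"] by simp

lemma sos_cone_mono:
  assumes "r \<le> r'" "s \<in> sos_cone n r"
  shows "s \<in> sos_cone n r'"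
proof -
  obtain qs where "s = sum_list (map (\<lambda>q. q ^ 2) qs)"
    and "\<And>q. q \<in> set qs \<Longrightarrow> mpoly_in n q \<and> 2 * int (mdeg q) \<le> r"
    using assms(2) by (rule sos_cone_elim) blast
  then show ?thesis
    using assms(1) by (force intro!: sos_cone_intro)
qed

lemma square_mult_sos_cone:
  assumes "s \<in> sos_cone n r" "mpoly_in n q"
  shows "q\<^sup>2 * s \<in> sos_cone n (r + 2 * int (mdeg q))"
proof -
  obtain ts where s: "s = sum_list (map (\<lambda>t. t ^ 2) ts)"
    and ts: "\<And>t. t \<in> set ts \<Longrightarrow> mpoly_in n t \<and> 2 * int (mdeg t) \<le> r"
    using assms(1) by (rule sos_cone_elim) blast
  have "q\<^sup>2 * s = sum_list (map (\<lambda>t. t ^ 2) (map ((*) q) ts))"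
    unfolding s by (induction ts) (simp_all add: algebra_simps power2_eq_square)
  also have "\<dots> \<in> sos_cone n (r + 2 * int (mdeg q))"
  proof (rule sos_cone_intro)
    fix u
    assume "u \<in> set (map ((*) q) ts)"
    then obtain t where "t \<in> set ts" "u = q * t"
      by auto
    then show "mpoly_in n u \<and> 2 * int (mdeg u) \<le> r + 2 * int (mdeg q)"
      using ts[OF \<open>t \<in> set ts\<close>] assms(2) mdeg_mult_le[of q "mdeg q" t "mdeg t"]
      by (auto intro: mpoly_in_mult)
  qed
  finally show ?thesis .
qed

lemma quad_module_intro:
  "s0 \<in> sos_cone n r \<Longrightarrow> (\<And>i. i < n \<Longrightarrow> s i \<in> sos_cone n (r - 2))
    \<Longrightarrow> s0 + (\<Sum>i<n. (1 - mvar i ^ 2) * s i) \<in> quad_module n r"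
  unfolding quad_module_def by blast

lemma quad_module_elim:
  assumes "p \<in> quad_module n r"
  obtains s0 s where "s0 \<in> sos_cone n r" "\<And>i. i < n \<Longrightarrow> s i \<in> sos_cone n (r - 2)"
    and "p = s0 + (\<Sum>i<n. (1 - mvar i ^ 2) * s i)"
  using assms unfolding quad_module_def by blast

lemma quad_module_add:
  assumes "p \<in> quad_module n r" "q \<in> quad_module n r"
  shows "p + q \<in> quad_module n r"
proof -
  obtain s0 s where s: "s0 \<in> sos_cone n r" "\<And>i. i < n \<Longrightarrow> s i \<in> sos_cone n (r - 2)"
    and p: "p = s0 + (\<Sum>i<n. (1 - mvar i ^ 2) * s i)"
    using assms(1) by (rule quad_module_elim) blast
  obtain t0 t where t: "t0 \<in> sos_cone n r" "\<And>i. i < n \<Longrightarrow> t i \<in> sos_cone n (r - 2)"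
    and q: "q = t0 + (\<Sum>i<n. (1 - mvar i ^ 2) * t i)"
    using assms(2) by (rule quad_module_elim) blast
  have "p + q = (s0 + t0) + (\<Sum>i<n. (1 - mvar i ^ 2) * (s i + t i))"
    unfolding p q by (simp add: distrib_left sum.distrib)
  also have "\<dots> \<in> quad_module n r"
    using s t by (intro quad_module_intro sos_cone_add) auto
  finally show ?thesis .
qed

lemma sos_cone_subset_quad_module: "sos_cone n r \<subseteq> quad_module n r"
  using quad_module_intro[of _ n r "\<lambda>_. 0"] sos_cone_zero by auto

lemma quad_module_zero: "0 \<in> quad_module n r"
  using sos_cone_subset_quad_module sos_cone_zero by blast

lemma quad_module_sum:
  "(\<And>x. x \<in> A \<Longrightarrow> f x \<in> quad_module n r) \<Longrightarrow> sum f A \<in> quad_module n r"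
  by (induction A rule: infinite_finite_induct) (auto intro: quad_module_zero quad_module_add)

lemma generator_mult_in_quad_module:
  assumes "i < n" "s \<in> sos_cone n (r - 2)"
  shows "(1 - mvar i ^ 2) * s \<in> quad_module n r"
proof -
  have "(1 - mvar i ^ 2) * s = 0 + (\<Sum>j<n. (1 - mvar j ^ 2) * (if j = i then s else 0))"
    using assms(1) by (simp add: if_distrib cong: if_cong)
  also have "\<dots> \<in> quad_module n r"
    using assms sos_cone_zero by (intro quad_module_intro) auto
  finally show ?thesis .
qed

lemma quad_module_mono:
  assumes "r \<le> r'" "p \<in> quad_module n r"
  shows "p \<in> quad_module n r'"
proof -
  obtain s0 s where s: "s0 \<in> sos_cone n r" "\<And>i. i < n \<Longrightarrow> s i \<in> sos_cone n (r - 2)"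
    and p: "p = s0 + (\<Sum>i<n. (1 - mvar i ^ 2) * s i)"
    using assms(2) by (rule quad_module_elim) blast
  show ?thesis
    unfolding p
  proof (rule quad_module_intro)
    show "s0 \<in> sos_cone n r'"
      using assms(1) s(1) by (rule sos_cone_mono)
    fix i
    assume "i < n"
    have "r - 2 \<le> r' - 2"
      using assms(1) by simp
    then show "s i \<in> sos_cone n (r' - 2)"
      using s(2)[OF \<open>i < n\<close>] by (rule sos_cone_mono)
  qed
qed

lemma square_mult_quad_module:
  assumes "p \<in> quad_module n r" "mpoly_in n q"
  shows "q\<^sup>2 * p \<in> quad_module n (r + 2 * int (mdeg q))"
proof -
  obtain s0 s where s: "s0 \<in> sos_cone n r" "\<And>i. i < n \<Longrightarrow> s i \<in> sos_cone n (r - 2)"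
    and p: "p = s0 + (\<Sum>i<n. (1 - mvar i ^ 2) * s i)"
    using assms(1) by (rule quad_module_elim) blast
  have "q\<^sup>2 * p = q\<^sup>2 * s0 + (\<Sum>i<n. (1 - mvar i ^ 2) * (q\<^sup>2 * s i))"
    unfolding p by (simp add: distrib_left sum_distrib_left mult.left_commute)
  also have "\<dots> \<in> quad_module n (r + 2 * int (mdeg q))"
  proof (rule quad_module_intro)
    show "q\<^sup>2 * s0 \<in> sos_cone n (r + 2 * int (mdeg q))"
      using s(1) assms(2) by (rule square_mult_sos_cone)
    fix i
    assume "i < n"
    show "q\<^sup>2 * s i \<in> sos_cone n (r + 2 * int (mdeg q) - 2)"
      using square_mult_sos_cone[OF s(2)[OF \<open>i < n\<close>] assms(2)] by (simp add: algebra_simps)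
  qed
  finally show ?thesis .
qed

lemma mconst_mult_quad_module:
  assumes "0 \<le> c" "p \<in> quad_module n r"
  shows "mconst c * p \<in> quad_module n r"
proof -
  have "mconst c = (mconst (sqrt c))\<^sup>2"
    using assms(1) by (simp add: power2_eq_square flip: mconst_mult)
  then show ?thesis
    using square_mult_quad_module[OF assms(2), of "mconst (sqrt c)"] by simp
qed

section \<open>Certificates\<close>

lemma one_minus_prod_square_in_quad_module:
  assumes "finite S"
    and "\<And>j. j \<in> S \<Longrightarrow> mpoly_in n (q j)"
    and "\<And>j. j \<in> S \<Longrightarrow> mdeg (q j) \<le> d j"
    and "\<And>j. j \<in> S \<Longrightarrow> 1 - (q j)\<^sup>2 \<in> quad_module n (2 * int (d j))"
  shows "1 - (\<Prod>j\<in>S. q j)\<^sup>2 \<in> quad_module n (2 * int (\<Sum>j\<in>S. d j))"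
  using assms
proof (induction S rule: finite_induct)
  case empty
  then show ?case
    by (simp add: quad_module_zero)
next
  case (insert j S)
  let ?P = "\<Prod>j\<in>S. q j"
  have "1 - (q j)\<^sup>2 \<in> quad_module n (2 * int (d j + (\<Sum>j\<in>S. d j)))"
    using insert.prems(3)[OF insertI1] by (rule quad_module_mono[rotated]) (simp add: sum_nonneg)
  moreover have "(q j)\<^sup>2 * (1 - ?P\<^sup>2)
      \<in> quad_module n (2 * int (\<Sum>j\<in>S. d j) + 2 * int (mdeg (q j)))"
    using insert by (intro square_mult_quad_module) simp_all
  then have "(q j)\<^sup>2 * (1 - ?P\<^sup>2) \<in> quad_module n (2 * int (d j + (\<Sum>j\<in>S. d j)))"
    by (rule quad_module_mono[rotated]) (use insert.prems(2)[OF insertI1] in simp)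
  ultimately have "(1 - (q j)\<^sup>2) + (q j)\<^sup>2 * (1 - ?P\<^sup>2)
      \<in> quad_module n (2 * int (d j + (\<Sum>j\<in>S. d j)))"
    by (rule quad_module_add)
  moreover have "1 - (\<Prod>j\<in>insert j S. q j)\<^sup>2 = (1 - (q j)\<^sup>2) + (q j)\<^sup>2 * (1 - ?P\<^sup>2)"
    using insert.hyps by (simp add: algebra_simps)
  ultimately show ?case
    by (simp only: sum.insert[OF insert.hyps])
qed

lemma one_minus_cheb_var_square_in_quad_module:
  assumes "i < n"
  shows "1 - (cheb_var i k)\<^sup>2 \<in> quad_module n (2 * int k)"
proof (cases k)
  case 0
  then show ?thesis
    by (simp add: quad_module_zero)
next
  case (Suc k')
  have "1 - (cheb_var i k)\<^sup>2 = (1 - mvar i ^ 2) * (cheb_U (mvar i) k')\<^sup>2"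
    using cheb_pell[of "mvar i" k'] unfolding Suc cheb_var_eq_cheb_T by (simp add: algebra_simps)
  moreover have "(cheb_U (mvar i) k')\<^sup>2 \<in> sos_cone n (2 * int k - 2)"
    using assms mdeg_cheb_U_le[of "mvar i" k'] Suc
    by (intro square_in_sos_cone mpoly_in_cheb_U mpoly_in_mvar) (simp_all add: mdeg_mvar)
  ultimately show ?thesis
    using assms by (simp add: generator_mult_in_quad_module)
qed

lemma one_minus_cheb_multi_square_in_quad_module:
  "Poly_Mapping.keys a \<subseteq> {..<n} \<Longrightarrow> 1 - (cheb_multi a)\<^sup>2 \<in> quad_module n (2 * int (deg_pm a))"
  unfolding cheb_multi_def deg_pm_def
  by (intro one_minus_prod_square_in_quad_module mpoly_in_cheb_var mdeg_cheb_var_le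
      one_minus_cheb_var_square_in_quad_module) auto

lemma one_minus_in_quad_module:
  assumes "mpoly_in n q" "mdeg q \<le> d" "1 - q\<^sup>2 \<in> quad_module n (2 * int d)"
  shows "1 - q \<in> quad_module n (2 * int d)"
proof -
  have "mdeg (1 - q) \<le> d"
    using assms(2) by (intro mdeg_diff_le) simp_all
  then have "(1 - q)\<^sup>2 \<in> sos_cone n (2 * int d)"
    using assms(1) by (intro square_in_sos_cone mpoly_in_diff) simp_all
  then have "(1 - q)\<^sup>2 + (1 - q\<^sup>2) \<in> quad_module n (2 * int d)"
    using sos_cone_subset_quad_module assms(3) by (blast intro: quad_module_add)
  moreover have "(1 - q)\<^sup>2 + (1 - q\<^sup>2) = 2 * (1 - q)"
    by (simp add: algebra_simps power2_eq_square)
  ultimately have "mconst (1 / 2) * (2 * (1 - q)) \<in> quad_module n (2 * int d)"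
    by (simp add: mconst_mult_quad_module)
  then show ?thesis
    by (simp only: mconst_half_mult_double)
qed

lemma abs_minus_cheb_multi_in_quad_module:
  assumes "Poly_Mapping.keys a \<subseteq> {..<n}"
  shows "mconst (\<bar>c\<bar>) - mconst c * cheb_multi a \<in> quad_module n (2 * int (deg_pm a))"
proof -
  obtain q where q: "q = cheb_multi a \<or> q = - cheb_multi a"
    and eq: "mconst (\<bar>c\<bar>) - mconst c * cheb_multi a = mconst (\<bar>c\<bar>) * (1 - q)"
  proof (cases "0 \<le> c")
    case True
    then show ?thesis
      by (intro that[of "cheb_multi a"]) (simp_all add: right_diff_distrib)
  next
    case False
    then show ?thesis
      by (intro that[of "- cheb_multi a"]) (simp_all add: mconst_uminus distrib_left)
  qed
  have "mpoly_in n q" "mdeg q \<le> deg_pm a" "q\<^sup>2 = (cheb_multi a)\<^sup>2"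
    using q mpoly_in_cheb_multi[OF assms] mdeg_cheb_multi_le[of a] by (auto intro: mpoly_in_uminus)
  then have "1 - q \<in> quad_module n (2 * int (deg_pm a))"
    using one_minus_cheb_multi_square_in_quad_module[OF assms]
    by (intro one_minus_in_quad_module[of n q]) simp_all
  then show ?thesis
    unfolding eq by (simp add: mconst_mult_quad_module)
qed

theorem corollary3:
  fixes n :: nat and p :: mpoly
  assumes "mpoly_in n p"
  shows "mconst (cheb_norm1 p) - p \<in> quad_module n (2 * int (mdeg p))"
proof -
  obtain c where p: "p = cheb_expand c"
    and c: "\<forall>\<alpha>\<in>Poly_Mapping.keys c. Poly_Mapping.keys \<alpha> \<subseteq> {..<n} \<and> deg_pm \<alpha> \<le> mdeg p"
    using mpoly_in_cheb_span[OF assms] unfolding cheb_span_def by blast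
  have "mconst (cheb_norm1 p) - p = (\<Sum>\<alpha>\<in>Poly_Mapping.keys c.
      mconst (\<bar>Poly_Mapping.lookup c \<alpha>\<bar>) - mconst (Poly_Mapping.lookup c \<alpha>) * cheb_multi \<alpha>)"
    unfolding cheb_norm1_def p cheb_coeffs_cheb_expand
    by (simp add: cheb_expand_def mconst_sum sum_subtractf)
  also have "\<dots> \<in> quad_module n (2 * int (mdeg p))"
    using c by (intro quad_module_sum quad_module_mono[OF _ abs_minus_cheb_multi_in_quad_module]) auto
  finally show ?thesis .
qed

end
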